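(* Let $n,r\ge 1$ be integers. If $G(n,r)$ has a vertex $v$ all of whose positive entries equal $1$, then the maximum degree of $G(n,r)$ satisfies $\Delta(G(n,r))=d(v)=\frac{nr(nr-2r+1)}{2}$.
   Context: For integers $n,r\ge 1$, $G(n,r)$ is the simple undirected graph whose vertices are the $n\times n$ matrices with non-negative integer entries all of whose row sums and column sums equal $r$. Let $e_{ij}$ be the $n\times n$ matrix with a $1$ in position $(i,j)$ and $0$ elsewhere, and let $\mathcal{B}=\{\pm(e_{ij}+e_{kl}-e_{il}-e_{kj}) : 1\le i<k\le n,\ 1\le j<l\le n\}$. Two vertices $u,v$ are adjacent iff $u-v\in\mathcal{B}$. $d(v)$ denotes the degree of $v$ and $\Delta(G)$ the maximum degree of $G$. *)

theory Defs
  imports Complex_Main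
begin

text \<open>An n x n matrix is represented as a function nat => nat => int whose
entries vanish outside the index range {0..<n} x {0..<n} (indices 0-based).\<close>

definition vertices :: "nat \<Rightarrow> nat \<Rightarrow> (nat \<Rightarrow> nat \<Rightarrow> int) set" where
  "vertices n r = {M. (\<forall>i j. (n \<le> i \<or> n \<le> j) \<longrightarrow> M i j = 0)
      \<and> (\<forall>i j. 0 \<le> M i j)
      \<and> (\<forall>i<n. (\<Sum>j<n. M i j) = int r)
      \<and> (\<forall>j<n. (\<Sum>i<n. M i j) = int r)}"

definition unitm :: "nat \<Rightarrow> nat \<Rightarrow> nat \<Rightarrow> nat \<Rightarrow> int" where
  "unitm i j = (\<lambda>a b. if a = i \<and> b = j then 1 else 0)"

definition moves :: "nat \<Rightarrow> (nat \<Rightarrow> nat \<Rightarrow> int) set" where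
  "moves n = {(\<lambda>a b. s * (unitm i j a b + unitm k l a b - unitm i l a b - unitm k j a b))
      | i k j l s. i < k \<and> k < n \<and> j < l \<and> l < n \<and> (s = 1 \<or> s = -1)}"

definition adj :: "nat \<Rightarrow> nat \<Rightarrow> (nat \<Rightarrow> nat \<Rightarrow> int) \<Rightarrow> (nat \<Rightarrow> nat \<Rightarrow> int) \<Rightarrow> bool" where
  "adj n r u v \<longleftrightarrow> u \<in> vertices n r \<and> v \<in> vertices n r \<and> (\<lambda>a b. u a b - v a b) \<in> moves n"

definition degree :: "nat \<Rightarrow> nat \<Rightarrow> (nat \<Rightarrow> nat \<Rightarrow> int) \<Rightarrow> nat" where
  "degree n r v = card {u \<in> vertices n r. adj n r u v}"

definition max_degree :: "nat \<Rightarrow> nat \<Rightarrow> nat" where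
  "max_degree n r = Max (degree n r ` vertices n r)"

end

theory Submission
  imports Defs "HOL-Analysis.Convex"
begin

(* A neighbour of w is w - D, where D = e_ij + e_kl - e_il - e_kj (i < k, j <> l) and the cells
   (i,j), (k,l) lie in the support of w.  Hence d(w) is the number of unordered pairs of support
   cells in different rows and different columns ("independent pairs"), and 2 d(w) is the number
   of ordered such pairs.

   For a set S of s cells in an n x n grid with row counts a_i and column counts b_j,
   inclusion-exclusion over same-row and same-column pairs gives
        #ordered independent pairs = s^2 + s - sum a_i^2 - sum b_j^2.
   By Cauchy-Schwarz, sum a_i^2 >= s^2/n and sum b_j^2 >= s^2/n, so n * 2 d(w) <= (n-2) s^2 + n s,
   and s <= nr gives 2 d(w) <= nr(nr - 2r + 1) when n >= 2.  A 0/1 vertex has a_i = b_j = r and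
   s = nr, so it attains the bound exactly, and is therefore of maximum degree. *)

lemma square_sum_le_card_times_sum_squares:
  fixes x :: "'a \<Rightarrow> real"
  shows "(\<Sum>i\<in>I. x i)\<^sup>2 \<le> real (card I) * (\<Sum>i\<in>I. (x i)\<^sup>2)"
  using Cauchy_Schwarz_ineq_sum[of x "\<lambda>_. 1" I] by (simp add: mult.commute)

lemma card_eq_sum_card_fibres:
  assumes "finite A" "finite T" "f ` A \<subseteq> T"
  shows "card A = (\<Sum>y\<in>T. card {x \<in> A. f x = y})"
  using sum.group[OF assms, of "\<lambda>_. 1 :: nat"] by simp

lemma card_positive_le_sum:
  fixes f :: "'a \<Rightarrow> int"
  assumes "finite A" "\<And>x. x \<in> A \<Longrightarrow> 0 \<le> f x"
  shows "int (card {x \<in> A. 0 < f x}) \<le> sum f A"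
proof -
  have "int (card {x \<in> A. 0 < f x}) = (\<Sum>x\<in>A. if 0 < f x then 1 else 0)"
    using sum.inter_filter[OF assms(1), of "\<lambda>_. 1 :: int"] by simp
  also have "\<dots> \<le> sum f A" using assms(2) by (intro sum_mono) auto
  finally show ?thesis .
qed

lemma card_positive_eq_sum:
  fixes f :: "'a \<Rightarrow> int"
  assumes "finite A" "\<And>x. x \<in> A \<Longrightarrow> f x = 0 \<or> f x = 1"
  shows "int (card {x \<in> A. 0 < f x}) = sum f A"
proof -
  have "int (card {x \<in> A. 0 < f x}) = (\<Sum>x\<in>A. if 0 < f x then 1 else 0)"
    using sum.inter_filter[OF assms(1), of "\<lambda>_. 1 :: int"] by simp
  also have "\<dots> = sum f A" by (intro sum.cong refl) (use assms(2) in fastforce)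
  finally show ?thesis .
qed

definition row_cells :: "(nat \<times> nat) set \<Rightarrow> nat \<Rightarrow> (nat \<times> nat) set" where
  "row_cells S i = {c \<in> S. fst c = i}"

definition col_cells :: "(nat \<times> nat) set \<Rightarrow> nat \<Rightarrow> (nat \<times> nat) set" where
  "col_cells S j = {c \<in> S. snd c = j}"

definition independent_pairs :: "(nat \<times> nat) set \<Rightarrow> ((nat \<times> nat) \<times> (nat \<times> nat)) set" where
  "independent_pairs S = {(c, d) \<in> S \<times> S. fst c \<noteq> fst d \<and> snd c \<noteq> snd d}"

(* Independent pairs oriented so that the first cell lies in the upper row; each unordered
   independent pair is represented exactly once. *)
definition swap_pairs :: "(nat \<times> nat) set \<Rightarrow> ((nat \<times> nat) \<times> (nat \<times> nat)) set" where
  "swap_pairs S = {(c, d) \<in> independent_pairs S. fst c < fst d}"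

lemma card_independent_pairs:
  assumes "finite S"
  shows "card (independent_pairs S) = 2 * card (swap_pairs S)"
proof -
  let ?flip = "\<lambda>(c :: nat \<times> nat, d :: nat \<times> nat). (d, c)"
  have fin: "finite (swap_pairs S)"
    by (rule finite_subset[of _ "S \<times> S"]) (auto simp: swap_pairs_def independent_pairs_def assms)
  have split: "independent_pairs S = swap_pairs S \<union> ?flip ` swap_pairs S"
    by (auto simp: independent_pairs_def swap_pairs_def image_iff)
  have "card (swap_pairs S \<union> ?flip ` swap_pairs S) = card (swap_pairs S) + card (?flip ` swap_pairs S)"
    by (rule card_Un_disjoint[OF fin finite_imageI[OF fin]]) (auto simp: swap_pairs_def)
  moreover have "card (?flip ` swap_pairs S) = card (swap_pairs S)"
    by (rule card_image) (auto simp: inj_on_def)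
  ultimately show ?thesis using split by simp
qed

lemma card_eq_sum_row_cells:
  assumes "S \<subseteq> {..<n} \<times> {..<n}"
  shows "card S = (\<Sum>i<n. card (row_cells S i))"
  unfolding row_cells_def
  by (rule card_eq_sum_card_fibres) (use assms in \<open>auto intro: finite_subset\<close>)

lemma card_eq_sum_col_cells:
  assumes "S \<subseteq> {..<n} \<times> {..<n}"
  shows "card S = (\<Sum>j<n. card (col_cells S j))"
  unfolding col_cells_def
  by (rule card_eq_sum_card_fibres) (use assms in \<open>auto intro: finite_subset\<close>)

(* Inclusion-exclusion: S x S splits into the independent pairs and the pairs sharing a row or
   a column; pairs sharing both are the diagonal pairs (c, c). *)
lemma independent_pairs_count:
  assumes S: "S \<subseteq> {..<n} \<times> {..<n}"
  shows "card (independent_pairs S) + (\<Sum>i<n. (card (row_cells S i))\<^sup>2) + (\<Sum>j<n. (card (col_cells S j))\<^sup>2)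
    = (card S)\<^sup>2 + card S"
proof -
  have fin: "finite S" using S by (rule finite_subset) simp
  define R where "R = {(c, d) \<in> S \<times> S. fst c = fst d}"
  define C where "C = {(c, d) \<in> S \<times> S. snd c = snd d}"
  have fin_RC: "finite R" "finite C"
    by (rule finite_subset[of _ "S \<times> S"], auto simp: R_def C_def fin)+
  have card_R: "card R = (\<Sum>i<n. (card (row_cells S i))\<^sup>2)"
  proof -
    have "card R = (\<Sum>i<n. card {p \<in> R. fst (fst p) = i})"
      by (rule card_eq_sum_card_fibres) (use S fin_RC in \<open>auto simp: R_def\<close>)
    also have "\<dots> = (\<Sum>i<n. card (row_cells S i \<times> row_cells S i))"
      by (intro sum.cong refl arg_cong[where f = card]) (auto simp: R_def row_cells_def)
    finally show ?thesis by (simp add: card_cartesian_product power2_eq_square)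
  qed
  have card_C: "card C = (\<Sum>j<n. (card (col_cells S j))\<^sup>2)"
  proof -
    have "card C = (\<Sum>j<n. card {p \<in> C. snd (fst p) = j})"
      by (rule card_eq_sum_card_fibres) (use S fin_RC in \<open>auto simp: C_def\<close>)
    also have "\<dots> = (\<Sum>j<n. card (col_cells S j \<times> col_cells S j))"
      by (intro sum.cong refl arg_cong[where f = card]) (auto simp: C_def col_cells_def)
    finally show ?thesis by (simp add: card_cartesian_product power2_eq_square)
  qed
  have "card (R \<inter> C) = card S"
  proof -
    have "R \<inter> C = (\<lambda>c. (c, c)) ` S" by (auto simp: R_def C_def prod_eq_iff)
    then show ?thesis by (simp add: card_image inj_on_def)
  qed
  then have card_RC: "card (R \<union> C) + card S = card R + card C"
    using card_Un_Int[OF fin_RC] by simp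
  have fin_I: "finite (independent_pairs S)"
    by (rule finite_subset[of _ "S \<times> S"]) (auto simp: independent_pairs_def fin)
  have "(card S)\<^sup>2 = card (S \<times> S)"
    by (simp add: card_cartesian_product power2_eq_square)
  also have "S \<times> S = independent_pairs S \<union> (R \<union> C)"
    by (auto simp: independent_pairs_def R_def C_def)
  also have "card \<dots> = card (independent_pairs S) + card (R \<union> C)"
    by (rule card_Un_disjoint[OF fin_I finite_UnI[OF fin_RC]])
       (auto simp: independent_pairs_def R_def C_def)
  finally have card_SS: "(card S)\<^sup>2 = card (independent_pairs S) + card (R \<union> C)" .
  show ?thesis
    unfolding card_R[symmetric] card_C[symmetric] using card_SS card_RC by linarith
qed

(* If every row holds at most r cells of S, then Cauchy-Schwarz applied to the row counts and
   to the column counts bounds the number of independent pairs by nr(nr - 2r + 1), for n >= 2. *)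
lemma independent_pairs_bound:
  fixes n r :: nat
  assumes S: "S \<subseteq> {..<n} \<times> {..<n}" and n: "2 \<le> n"
    and rows: "\<And>i. i < n \<Longrightarrow> card (row_cells S i) \<le> r"
  shows "real (card (independent_pairs S)) \<le> real n * real r * (real n * real r - 2 * real r + 1)"
proof -
  define s where "s = real (card S)"
  define A where "A = (\<Sum>i<n. (real (card (row_cells S i)))\<^sup>2)"
  define B where "B = (\<Sum>j<n. (real (card (col_cells S j)))\<^sup>2)"
  define N where "N = real n * real r"
  have count: "real (card (independent_pairs S)) = s\<^sup>2 + s - A - B"
    using arg_cong[OF independent_pairs_count[OF S], of real] by (simp add: s_def A_def B_def)
  have cs_rows: "s\<^sup>2 \<le> real n * A"
    using square_sum_le_card_times_sum_squares[of "\<lambda>i. real (card (row_cells S i))" "{..<n}"]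
    by (simp add: s_def A_def card_eq_sum_row_cells[OF S])
  have cs_cols: "s\<^sup>2 \<le> real n * B"
    using square_sum_le_card_times_sum_squares[of "\<lambda>j. real (card (col_cells S j))" "{..<n}"]
    by (simp add: s_def B_def card_eq_sum_col_cells[OF S])
  have "card S \<le> n * r"
    using sum_mono[of "{..<n}" "\<lambda>i. card (row_cells S i)" "\<lambda>_. r"] rows
    by (simp add: card_eq_sum_row_cells[OF S])
  then have s_le: "s \<le> N" by (simp add: s_def N_def flip: of_nat_mult)
  have "real n * real (card (independent_pairs S)) \<le> (real n - 2) * s\<^sup>2 + real n * s"
    using cs_rows cs_cols unfolding count by (simp add: algebra_simps)
  also have "\<dots> \<le> (real n - 2) * N\<^sup>2 + real n * N"
  proof -
    have "s\<^sup>2 \<le> N\<^sup>2" using s_le by (intro power_mono) (simp_all add: s_def)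
    then show ?thesis using s_le n by (intro add_mono mult_left_mono) simp_all
  qed
  also have "\<dots> = real n * (N * (N - 2 * real r + 1))"
    by (simp add: N_def algebra_simps power2_eq_square)
  finally show ?thesis using n by (simp add: N_def)
qed

lemma independent_pairs_regular:
  fixes n r :: nat
  assumes S: "S \<subseteq> {..<n} \<times> {..<n}"
    and rows: "\<And>i. i < n \<Longrightarrow> card (row_cells S i) = r"
    and cols: "\<And>j. j < n \<Longrightarrow> card (col_cells S j) = r"
  shows "real (card (independent_pairs S)) = real n * real r * (real n * real r - 2 * real r + 1)"
proof -
  have "card S = n * r" using rows by (simp add: card_eq_sum_row_cells[OF S])
  then show ?thesis
    using arg_cong[OF independent_pairs_count[OF S], of real] rows cols
    by (simp add: algebra_simps power2_eq_square)
qed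

(* G(n,r) is finite, since all entries of a vertex lie in [0, r]. *)
lemma finite_vertices: "finite (vertices n r)"
proof -
  let ?Row = "{g :: nat \<Rightarrow> int. \<forall>j. (j \<in> {..<n} \<longrightarrow> g j \<in> {0..int r}) \<and> (j \<notin> {..<n} \<longrightarrow> g j = 0)}"
  let ?Mat = "{M :: nat \<Rightarrow> nat \<Rightarrow> int. \<forall>i. (i \<in> {..<n} \<longrightarrow> M i \<in> ?Row) \<and> (i \<notin> {..<n} \<longrightarrow> M i = (\<lambda>_. 0))}"
  have "finite ?Row" by (rule finite_set_of_finite_funs) auto
  then have "finite ?Mat" by (intro finite_set_of_finite_funs) auto
  moreover have "vertices n r \<subseteq> ?Mat"
  proof
    fix M assume M: "M \<in> vertices n r"
    have "M i j \<le> int r" if "i < n" "j < n" for i j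
    proof -
      have "M i j \<le> (\<Sum>j'<n. M i j')"
        using M that by (intro member_le_sum) (auto simp: vertices_def)
      then show ?thesis using M that by (simp add: vertices_def)
    qed
    then show "M \<in> ?Mat" using M by (auto simp: vertices_def)
  qed
  ultimately show ?thesis by (rule finite_subset[rotated])
qed

definition exchange :: "nat \<Rightarrow> nat \<Rightarrow> nat \<Rightarrow> nat \<Rightarrow> nat \<Rightarrow> nat \<Rightarrow> int" where
  "exchange i j k l = (\<lambda>a b. unitm i j a b + unitm k l a b - unitm i l a b - unitm k j a b)"

(* For i <> k and j <> l the four cells are distinct, so the move matrix has value 1 exactly at
   (i,j) and (k,l); this determines the move from its matrix. *)
lemma exchange_eq_1_iff:
  assumes "i \<noteq> k" "j \<noteq> l"
  shows "exchange i j k l a b = 1 \<longleftrightarrow> (a, b) = (i, j) \<or> (a, b) = (k, l)"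
  using assms by (auto simp: exchange_def unitm_def)

lemma exchange_flip: "exchange i j k l a b = - exchange i l k j a b"
  by (simp add: exchange_def)

lemma unitm_row_sum: "j < n \<Longrightarrow> (\<Sum>b<n. unitm i j a b) = (if a = i then 1 else 0)"
  by (simp add: unitm_def)

lemma unitm_col_sum: "i < n \<Longrightarrow> (\<Sum>a<n. unitm i j a b) = (if b = j then 1 else 0)"
  by (simp add: unitm_def)

lemma exchange_row_sum: "j < n \<Longrightarrow> l < n \<Longrightarrow> (\<Sum>b<n. exchange i j k l a b) = 0"
  by (simp add: exchange_def sum.distrib sum_subtractf unitm_row_sum)

lemma exchange_col_sum: "i < n \<Longrightarrow> k < n \<Longrightarrow> (\<Sum>a<n. exchange i j k l a b) = 0"
  by (simp add: exchange_def sum.distrib sum_subtractf unitm_col_sum)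

lemma exchange_le_entry:
  fixes w :: "nat \<Rightarrow> nat \<Rightarrow> int"
  assumes "i \<noteq> k" "j \<noteq> l" "\<And>a b. 0 \<le> w a b" "0 < w i j" "0 < w k l"
  shows "exchange i j k l a b \<le> w a b"
  using assms(1,2) assms(3)[of a b] assms(4,5) by (auto simp: exchange_def unitm_def)

lemma exchange_mem_moves:
  assumes "i < k" "k < n" "j < l" "l < n" "s = 1 \<or> s = -1"
  shows "(\<lambda>a b. s * exchange i j k l a b) \<in> moves n"
  unfolding moves_def exchange_def using assms by blast

definition support :: "nat \<Rightarrow> (nat \<Rightarrow> nat \<Rightarrow> int) \<Rightarrow> (nat \<times> nat) set" where
  "support n w = {(i, j). i < n \<and> j < n \<and> 0 < w i j}"

lemma support_subset: "support n w \<subseteq> {..<n} \<times> {..<n}"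
  by (auto simp: support_def)

definition swap :: "(nat \<Rightarrow> nat \<Rightarrow> int) \<Rightarrow> (nat \<times> nat) \<times> (nat \<times> nat) \<Rightarrow> nat \<Rightarrow> nat \<Rightarrow> int" where
  "swap w p = (case p of ((i, j), (k, l)) \<Rightarrow> (\<lambda>a b. w a b - exchange i j k l a b))"

lemma swap_inj: "inj_on (swap w) (swap_pairs S)"
proof (rule inj_onI)
  fix p q assume p: "p \<in> swap_pairs S" and q: "q \<in> swap_pairs S" and eq: "swap w p = swap w q"
  obtain i j k l where p_def: "p = ((i, j), (k, l))" by (metis prod.collapse)
  obtain i' j' k' l' where q_def: "q = ((i', j'), (k', l'))" by (metis prod.collapse)
  have p_ord: "i < k" "j \<noteq> l" and q_ord: "i' < k'" "j' \<noteq> l'"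
    using p q by (auto simp: p_def q_def swap_pairs_def independent_pairs_def)
  have "exchange i j k l a b = exchange i' j' k' l' a b" for a b
    using fun_cong[OF fun_cong[OF eq, of a], of b] by (simp add: p_def q_def swap_def)
  then have "(a, b) = (i, j) \<or> (a, b) = (k, l) \<longleftrightarrow> (a, b) = (i', j') \<or> (a, b) = (k', l')" for a b
    using exchange_eq_1_iff[of i k j l a b] exchange_eq_1_iff[of i' k' j' l' a b] p_ord q_ord
    by (metis less_irrefl)
  from this[of i j] this[of k l] this[of i' j'] p_ord q_ord show "p = q"
    unfolding p_def q_def by auto
qed

lemma swap_mem_vertices:
  assumes w: "w \<in> vertices n r" and p: "p \<in> swap_pairs (support n w)"
  shows "swap w p \<in> vertices n r"
proof -
  obtain i j k l where p_def: "p = ((i, j), (k, l))" by (metis prod.collapse)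
  have c: "i < k" "j \<noteq> l" "k < n" "l < n" "i < n" "j < n" "0 < w i j" "0 < w k l"
    using p by (auto simp: p_def swap_pairs_def independent_pairs_def support_def)
  have entry: "swap w p a b = w a b - exchange i j k l a b" for a b
    by (simp add: p_def swap_def)
  have "0 \<le> swap w p a b" for a b
    using exchange_le_entry[of i k j l w a b] w c by (simp add: entry vertices_def)
  moreover have "swap w p a b = 0" if "n \<le> a \<or> n \<le> b" for a b
    using w c that by (auto simp: entry vertices_def exchange_def unitm_def)
  moreover have "(\<Sum>b<n. swap w p a b) = int r" if "a < n" for a
    using w c that by (simp add: entry vertices_def sum_subtractf exchange_row_sum)
  moreover have "(\<Sum>a<n. swap w p a b) = int r" if "b < n" for b
    using w c that by (simp add: entry vertices_def sum_subtractf exchange_col_sum)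
  ultimately show ?thesis by (simp add: vertices_def)
qed

lemma swap_adj:
  assumes w: "w \<in> vertices n r" and p: "p \<in> swap_pairs (support n w)"
  shows "adj n r (swap w p) w"
proof -
  obtain i j k l where p_def: "p = ((i, j), (k, l))" by (metis prod.collapse)
  have c: "i < k" "k < n" "j \<noteq> l" "j < n" "l < n"
    using p by (auto simp: p_def swap_pairs_def independent_pairs_def support_def)
  have diff: "(\<lambda>a b. swap w p a b - w a b) = (\<lambda>a b. - exchange i j k l a b)"
    by (simp add: p_def swap_def)
  have "(\<lambda>a b. swap w p a b - w a b) \<in> moves n"
  proof (cases "j < l")
    case True
    then show ?thesis
      using exchange_mem_moves[of i k n j l "-1"] c by (simp add: diff)
  next
    case False
    then show ?thesis
      using exchange_mem_moves[of i k n l j 1] c by (simp add: diff exchange_flip[of i l k j])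
  qed
  then show ?thesis using w swap_mem_vertices[OF w p] by (simp add: adj_def)
qed

(* Conversely, every neighbour of w is a swap: a move with sign -1 decreases w at (i,j) and
   (k,l), with sign +1 at (i,l) and (k,j), and non-negativity of the neighbour forces those
   cells into the support of w. *)
lemma adj_imp_swap:
  assumes "adj n r u w"
  shows "u \<in> swap w ` swap_pairs (support n w)"
proof -
  have u: "u \<in> vertices n r" and "(\<lambda>a b. u a b - w a b) \<in> moves n"
    using assms by (auto simp: adj_def)
  then obtain i k j l s where c: "i < k" "k < n" "j < l" "l < n" "s = 1 \<or> s = -1"
    and diff: "(\<lambda>a b. u a b - w a b) = (\<lambda>a b. s * exchange i j k l a b)"
    unfolding moves_def exchange_def by blast
  have entry: "u a b = w a b + s * exchange i j k l a b" for a b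
    using fun_cong[OF fun_cong[OF diff, of a], of b] by simp
  have u_nonneg: "0 \<le> u a b" for a b using u by (simp add: vertices_def)
  show ?thesis
  proof (cases "s = -1")
    case True
    have "0 < w i j" "0 < w k l"
      using u_nonneg[of i j] u_nonneg[of k l] c True by (auto simp: entry exchange_def unitm_def)
    then have "((i, j), (k, l)) \<in> swap_pairs (support n w)"
      using c by (auto simp: swap_pairs_def independent_pairs_def support_def)
    moreover have "u = swap w ((i, j), (k, l))"
      using True by (intro ext) (simp add: entry swap_def)
    ultimately show ?thesis by blast
  next
    case False
    then have s: "s = 1" using c by simp
    have "0 < w i l" "0 < w k j"
      using u_nonneg[of i l] u_nonneg[of k j] c s by (auto simp: entry exchange_def unitm_def)
    then have "((i, l), (k, j)) \<in> swap_pairs (support n w)"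
      using c by (auto simp: swap_pairs_def independent_pairs_def support_def)
    moreover have "u = swap w ((i, l), (k, j))"
      using s by (intro ext) (simp add: entry swap_def exchange_flip[of i l k j])
    ultimately show ?thesis by blast
  qed
qed

lemma degree_eq_card_swap_pairs:
  assumes w: "w \<in> vertices n r"
  shows "degree n r w = card (swap_pairs (support n w))"
proof -
  have "{u \<in> vertices n r. adj n r u w} = swap w ` swap_pairs (support n w)"
    using adj_imp_swap swap_adj[OF w] swap_mem_vertices[OF w] by (auto simp: adj_def)
  then show ?thesis
    unfolding degree_def by (simp add: card_image[OF swap_inj])
qed

lemma two_degree_eq:
  assumes "w \<in> vertices n r"
  shows "2 * degree n r w = card (independent_pairs (support n w))"
  using assms by (simp add: degree_eq_card_swap_pairs card_independent_pairs finite_subset[OF support_subset])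

lemma card_row_support: "i < n \<Longrightarrow> card (row_cells (support n w) i) = card {j \<in> {..<n}. 0 < w i j}"
proof -
  assume "i < n"
  then have "row_cells (support n w) i = Pair i ` {j \<in> {..<n}. 0 < w i j}"
    by (auto simp: row_cells_def support_def)
  then show ?thesis by (simp add: card_image inj_on_def)
qed

lemma card_col_support: "j < n \<Longrightarrow> card (col_cells (support n w) j) = card {i \<in> {..<n}. 0 < w i j}"
proof -
  assume "j < n"
  then have "col_cells (support n w) j = (\<lambda>i. (i, j)) ` {i \<in> {..<n}. 0 < w i j}"
    by (auto simp: col_cells_def support_def)
  then show ?thesis by (simp add: card_image inj_on_def)
qed

lemma card_row_support_le:
  assumes w: "w \<in> vertices n r" and i: "i < n"
  shows "card (row_cells (support n w) i) \<le> r"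
proof -
  have "int (card {j \<in> {..<n}. 0 < w i j}) \<le> (\<Sum>j<n. w i j)"
    using w by (intro card_positive_le_sum) (auto simp: vertices_def)
  then show ?thesis using w i by (simp add: card_row_support vertices_def)
qed

lemma zero_one_entry:
  assumes "v \<in> vertices n r" "\<forall>i j. 0 < v i j \<longrightarrow> v i j = 1"
  shows "v i j = 0 \<or> v i j = 1"
proof -
  have "0 \<le> v i j" using assms(1) by (simp add: vertices_def)
  then show ?thesis using assms(2) by (cases "0 < v i j") auto
qed

lemma card_row_support_zero_one:
  assumes v: "v \<in> vertices n r" and one: "\<forall>i j. 0 < v i j \<longrightarrow> v i j = 1" and i: "i < n"
  shows "card (row_cells (support n v) i) = r"
proof -
  have "int (card {j \<in> {..<n}. 0 < v i j}) = (\<Sum>j<n. v i j)"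
    using zero_one_entry[OF v one] by (intro card_positive_eq_sum) auto
  then show ?thesis using v i by (simp add: card_row_support vertices_def)
qed

lemma card_col_support_zero_one:
  assumes v: "v \<in> vertices n r" and one: "\<forall>i j. 0 < v i j \<longrightarrow> v i j = 1" and j: "j < n"
  shows "card (col_cells (support n v) j) = r"
proof -
  have "int (card {i \<in> {..<n}. 0 < v i j}) = (\<Sum>i<n. v i j)"
    using zero_one_entry[OF v one] by (intro card_positive_eq_sum) auto
  then show ?thesis using v j by (simp add: card_col_support vertices_def)
qed

lemma degree_bound:
  assumes w: "w \<in> vertices n r" and n: "2 \<le> n"
  shows "2 * real (degree n r w) \<le> real n * real r * (real n * real r - 2 * real r + 1)"
  using independent_pairs_bound[OF support_subset n card_row_support_le[OF w]]
  by (simp add: two_degree_eq[OF w, symmetric])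

lemma degree_zero_one:
  assumes v: "v \<in> vertices n r" and one: "\<forall>i j. 0 < v i j \<longrightarrow> v i j = 1"
  shows "2 * real (degree n r v) = real n * real r * (real n * real r - 2 * real r + 1)"
  using independent_pairs_regular[OF support_subset card_row_support_zero_one[OF v one]
      card_col_support_zero_one[OF v one]]
  by (simp add: two_degree_eq[OF v, symmetric])

(* A 0/1 vertex has maximum degree; for n = 1 every degree is 0. *)
lemma degree_le_degree_zero_one:
  assumes n: "1 \<le> n" and w: "w \<in> vertices n r"
    and v: "v \<in> vertices n r" and one: "\<forall>i j. 0 < v i j \<longrightarrow> v i j = 1"
  shows "degree n r w \<le> degree n r v"
proof (cases "n = 1")
  case True
  then have "swap_pairs (support n w) = {}"
    by (auto simp: swap_pairs_def independent_pairs_def support_def)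
  then show ?thesis by (simp add: degree_eq_card_swap_pairs[OF w])
next
  case False
  then have "2 * real (degree n r w) \<le> 2 * real (degree n r v)"
    using degree_bound[OF w] degree_zero_one[OF v one] n by simp
  then show ?thesis by simp
qed

theorem proposition2p3:
  fixes n r :: nat and v :: "nat \<Rightarrow> nat \<Rightarrow> int"
  assumes "n \<ge> 1" and "r \<ge> 1"
    and "v \<in> vertices n r"
    and "\<forall>i j. v i j > 0 \<longrightarrow> v i j = 1"
  shows "max_degree n r = degree n r v \<and>
         real (degree n r v) = real n * real r * (real n * real r - 2 * real r + 1) / 2"
proof
  show "max_degree n r = degree n r v"
    unfolding max_degree_def
    using finite_vertices degree_le_degree_zero_one assms(1,3,4) by (intro Max_eqI) auto
  show "real (degree n r v) = real n * real r * (real n * real r - 2 * real r + 1) / 2"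
    using degree_zero_one[OF assms(3,4)] by simp
qed

end
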